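(* For every integer $n\geqslant 2$, $\mathbf{I}\mathbb{N}_{\infty}^n$ is an $F$-inverse semigroup.
   Context: $\mathbb{N}=\{1,2,3,\ldots\}$ and $\mathbb{N}^n$ carries the Euclidean metric $d$. A partial isometry of $\mathbb{N}^n$ is an injective partial map $\alpha\colon\mathbb{N}^n\rightharpoonup\mathbb{N}^n$ with $d((\mathbf{x})\alpha,(\mathbf{y})\alpha)=d(\mathbf{x},\mathbf{y})$ for all $\mathbf{x},\mathbf{y}\in\operatorname{dom}\alpha$; it is cofinite if $\mathbb{N}^n\setminus\operatorname{dom}\alpha$ and $\mathbb{N}^n\setminus\operatorname{ran}\alpha$ are finite. $\mathbf{I}\mathbb{N}_{\infty}^n$ is the monoid of all partial cofinite isometries of $\mathbb{N}^n$ under composition of partial maps. An inverse semigroup $S$ is $F$-inverse if every element of $S$ lies below a unique maximal element with respect to the natural partial order ($s\preccurlyeq t$ iff $s=te$ for some idempotent $e$), equivalently every class of the least group congruence has a maximum element. *)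

theory Defs
  imports Complex_Main
begin

text \<open>Points of N^n (N = {1,2,3,...}) are represented as lists of length n of
positive naturals.\<close>

definition Npts :: "nat \<Rightarrow> nat list set" where
  "Npts n = {x. length x = n \<and> (\<forall>i<n. x ! i \<ge> 1)}"

definition eucl_dist :: "nat list \<Rightarrow> nat list \<Rightarrow> real" where
  "eucl_dist x y = sqrt (\<Sum>i<length x. (real (x ! i) - real (y ! i))\<^sup>2)"

definition partial_isometry :: "nat \<Rightarrow> (nat list \<rightharpoonup> nat list) \<Rightarrow> bool" where
  "partial_isometry n \<alpha> \<longleftrightarrow>
     dom \<alpha> \<subseteq> Npts n \<and> ran \<alpha> \<subseteq> Npts n \<and> inj_on \<alpha> (dom \<alpha>) \<and>
     (\<forall>x\<in>dom \<alpha>. \<forall>y\<in>dom \<alpha>. eucl_dist (the (\<alpha> x)) (the (\<alpha> y)) = eucl_dist x y)"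

definition cofinite_pmap :: "nat \<Rightarrow> (nat list \<rightharpoonup> nat list) \<Rightarrow> bool" where
  "cofinite_pmap n \<alpha> \<longleftrightarrow> finite (Npts n - dom \<alpha>) \<and> finite (Npts n - ran \<alpha>)"

definition IN_inf :: "nat \<Rightarrow> (nat list \<rightharpoonup> nat list) set" where
  "IN_inf n = {\<alpha>. partial_isometry n \<alpha> \<and> cofinite_pmap n \<alpha>}"

text \<open>Composition of partial maps, maps written on the right: (x)(\<alpha>\<beta>) = ((x)\<alpha>)\<beta>.\<close>
definition pcomp :: "('a \<rightharpoonup> 'a) \<Rightarrow> ('a \<rightharpoonup> 'a) \<Rightarrow> ('a \<rightharpoonup> 'a)" where
  "pcomp \<alpha> \<beta> = \<beta> \<circ>\<^sub>m \<alpha>"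

definition semigroup_on :: "'a set \<Rightarrow> ('a \<Rightarrow> 'a \<Rightarrow> 'a) \<Rightarrow> bool" where
  "semigroup_on S m \<longleftrightarrow> (\<forall>a\<in>S. \<forall>b\<in>S. m a b \<in> S) \<and>
     (\<forall>a\<in>S. \<forall>b\<in>S. \<forall>c\<in>S. m (m a b) c = m a (m b c))"

definition inverse_semigroup_on :: "'a set \<Rightarrow> ('a \<Rightarrow> 'a \<Rightarrow> 'a) \<Rightarrow> bool" where
  "inverse_semigroup_on S m \<longleftrightarrow> semigroup_on S m \<and>
     (\<forall>a\<in>S. \<exists>!b. b \<in> S \<and> m (m a b) a = a \<and> m (m b a) b = b)"

definition nat_po :: "'a set \<Rightarrow> ('a \<Rightarrow> 'a \<Rightarrow> 'a) \<Rightarrow> 'a \<Rightarrow> 'a \<Rightarrow> bool" where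
  "nat_po S m s t \<longleftrightarrow> (\<exists>e\<in>S. m e e = e \<and> s = m t e)"

definition maximal_in :: "'a set \<Rightarrow> ('a \<Rightarrow> 'a \<Rightarrow> 'a) \<Rightarrow> 'a \<Rightarrow> bool" where
  "maximal_in S m u \<longleftrightarrow> u \<in> S \<and> (\<forall>t\<in>S. nat_po S m u t \<longrightarrow> t = u)"

definition F_inverse :: "'a set \<Rightarrow> ('a \<Rightarrow> 'a \<Rightarrow> 'a) \<Rightarrow> bool" where
  "F_inverse S m \<longleftrightarrow> inverse_semigroup_on S m \<and>
     (\<forall>s\<in>S. \<exists>!u. maximal_in S m u \<and> nat_po S m s u)"

end

theory Submission
  imports Defs
begin

text \<open>The elements of \<open>IN\<^sup>n\<^sub>\<infinity>\<close> are partial bijections, so the natural partial order is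
  restriction of partial maps, the maximal elements are the total ones, and it suffices that
  every element has a unique total extension in the monoid. Such an extension is a
  permutation of coordinates. An element \<open>\<alpha>\<close>
  preserves the integer inner products \<open>\<langle>x - A, y - A\<rangle>\<close> at a base point \<open>A\<close> deep inside
  its domain, so the images of the unit steps \<open>A + e\<^sub>i\<close> are orthonormal integer vectors, i.e. a
  signed permutation \<open>\<pi>\<close> of the standard basis, and coordinate \<open>\<pi> i\<close> of \<open>\<alpha> x\<close> is
  \<open>c\<^sub>i \<plusminus> x\<^sub>i\<close>. As domain and range are cofinite in \<open>\<nat>\<^sup>n\<close> and \<open>n \<ge> 2\<close>, the sign is \<open>+\<close> and the
  shift \<open>c\<^sub>i\<close> is \<open>0\<close>. Two coordinate permutations agreeing on a cofinite set coincide, since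
  the set contains a point with distinct coordinates.\<close>

section \<open>Partial injections and the natural partial order\<close>

definition pinv :: "('a \<rightharpoonup> 'b) \<Rightarrow> ('b \<rightharpoonup> 'a)" where
  "pinv \<alpha> y = (if y \<in> ran \<alpha> then Some (THE x. \<alpha> x = Some y) else None)"

lemma pinv_eq_Some_iff:
  assumes "inj_on \<alpha> (dom \<alpha>)"
  shows "pinv \<alpha> y = Some x \<longleftrightarrow> \<alpha> x = Some y"
proof -
  have "(THE x'. \<alpha> x' = Some y) = x" if "\<alpha> x = Some y" for x
    using that assms by (intro the_equality) (metis domI inj_onD)+
  then show ?thesis
    by (auto simp: pinv_def ran_def)
qed

lemma dom_pinv: "dom (pinv \<alpha>) = ran \<alpha>"
  by (auto simp: pinv_def split: if_splits)

lemma ran_pinv: "inj_on \<alpha> (dom \<alpha>) \<Longrightarrow> ran (pinv \<alpha>) = dom \<alpha>"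
  by (auto simp: ran_def pinv_eq_Some_iff)

lemma inj_on_pinv: "inj_on \<alpha> (dom \<alpha>) \<Longrightarrow> inj_on (pinv \<alpha>) (dom (pinv \<alpha>))"
  by (rule inj_onI) (auto simp: pinv_eq_Some_iff)

lemma pinv_pinv:
  assumes "inj_on \<alpha> (dom \<alpha>)"
  shows "pinv (pinv \<alpha>) = \<alpha>"
proof
  fix x
  have "pinv (pinv \<alpha>) x = Some y \<longleftrightarrow> \<alpha> x = Some y" for y
    using assms by (simp add: pinv_eq_Some_iff inj_on_pinv)
  then show "pinv (pinv \<alpha>) x = \<alpha> x"
    by (metis not_None_eq)
qed

lemma pcomp_assoc: "pcomp (pcomp \<alpha> \<beta>) \<gamma> = pcomp \<alpha> (pcomp \<beta> \<gamma>)"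
  by (simp add: pcomp_def map_comp_def fun_eq_iff split: option.split)

lemma pcomp_pcomp_pinv:
  assumes "inj_on \<alpha> (dom \<alpha>)"
  shows "pcomp (pcomp \<alpha> (pinv \<alpha>)) \<alpha> = \<alpha>"
proof
  fix x show "pcomp (pcomp \<alpha> (pinv \<alpha>)) \<alpha> x = \<alpha> x"
    using assms by (cases "\<alpha> x") (simp_all add: pcomp_def pinv_eq_Some_iff)
qed

lemma pcomp_pcomp_eq_imp_Some:
  assumes "inj_on \<alpha> (dom \<alpha>)" "pcomp (pcomp \<alpha> \<beta>) \<alpha> = \<alpha>" "\<alpha> x = Some y"
  shows "\<beta> y = Some x"
proof -
  have "(\<alpha> \<circ>\<^sub>m (\<beta> \<circ>\<^sub>m \<alpha>)) x = Some y"
    using fun_cong[OF assms(2), of x] assms(3) by (simp add: pcomp_def)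
  then obtain z where "\<beta> y = Some z" "\<alpha> z = Some y"
    using assms(3) by (auto simp: map_comp_Some_iff)
  with assms(1,3) show ?thesis
    by (metis domI inj_onD)
qed

lemma pinv_unique:
  assumes "inj_on \<alpha> (dom \<alpha>)" "inj_on \<beta> (dom \<beta>)"
    and "pcomp (pcomp \<alpha> \<beta>) \<alpha> = \<alpha>" "pcomp (pcomp \<beta> \<alpha>) \<beta> = \<beta>"
  shows "\<beta> = pinv \<alpha>"
proof
  fix y
  have "\<beta> y = Some x \<longleftrightarrow> \<alpha> x = Some y" for x
    using pcomp_pcomp_eq_imp_Some[OF assms(1,3)] pcomp_pcomp_eq_imp_Some[OF assms(2,4)] by blast
  then show "\<beta> y = pinv \<alpha> y"
    using pinv_eq_Some_iff[OF assms(1)] by (metis not_None_eq)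
qed

lemma inverse_semigroup_on_partial_injections:
  assumes inj: "\<And>\<alpha>. \<alpha> \<in> S \<Longrightarrow> inj_on \<alpha> (dom \<alpha>)"
    and pcomp: "\<And>\<alpha> \<beta>. \<alpha> \<in> S \<Longrightarrow> \<beta> \<in> S \<Longrightarrow> pcomp \<alpha> \<beta> \<in> S"
    and pinv: "\<And>\<alpha>. \<alpha> \<in> S \<Longrightarrow> pinv \<alpha> \<in> S"
  shows "inverse_semigroup_on S pcomp"
  unfolding inverse_semigroup_on_def semigroup_on_def
proof (intro conjI ballI)
  fix \<alpha> assume \<alpha>: "\<alpha> \<in> S"
  have "pcomp (pcomp (pinv \<alpha>) \<alpha>) (pinv \<alpha>) = pinv \<alpha>"
    using pcomp_pcomp_pinv[OF inj_on_pinv[OF inj[OF \<alpha>]]] by (simp add: pinv_pinv[OF inj[OF \<alpha>]])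
  then show "\<exists>!\<beta>. \<beta> \<in> S \<and> pcomp (pcomp \<alpha> \<beta>) \<alpha> = \<alpha> \<and> pcomp (pcomp \<beta> \<alpha>) \<beta> = \<beta>"
    using pinv[OF \<alpha>] pcomp_pcomp_pinv[OF inj[OF \<alpha>]] pinv_unique[OF inj[OF \<alpha>] inj] by blast
qed (use pcomp pcomp_assoc in auto)

lemma pcomp_idem_Some_imp_eq:
  assumes "inj_on e (dom e)" "pcomp e e = e" "e x = Some y"
  shows "y = x"
proof -
  have "e y = Some y"
    using fun_cong[OF assms(2), of x] assms(3) by (simp add: pcomp_def)
  with assms(1,3) show ?thesis
    by (metis domI inj_onD)
qed

lemma nat_po_imp_map_le:
  assumes inj: "\<And>e. e \<in> S \<Longrightarrow> inj_on e (dom e)" and "nat_po S pcomp s t"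
  shows "s \<subseteq>\<^sub>m t"
proof -
  obtain e where e: "e \<in> S" "pcomp e e = e" and s: "s = e \<circ>\<^sub>m t"
    using assms(2) by (auto simp: nat_po_def pcomp_def)
  have "s x = t x" if sx: "s x = Some z" for x z
  proof -
    obtain y where "t x = Some y" "e y = Some z"
      using sx s by (auto simp: map_comp_Some_iff)
    then show ?thesis
      using sx pcomp_idem_Some_imp_eq[OF inj[OF e(1)] e(2)] by simp
  qed
  then show ?thesis
    by (auto simp: map_le_def)
qed

lemma map_le_imp_nat_po:
  assumes "inj_on t (dom t)" "s \<subseteq>\<^sub>m t" "Some |` ran s \<in> S"
  shows "nat_po S pcomp s t"
proof -
  have le: "t x = Some y" if "s x = Some y" for x y
    using assms(2) that by (metis domI map_le_def)
  have "s x = (Some |` ran s \<circ>\<^sub>m t) x" for x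
  proof (cases "t x")
    case (Some y)
    have "y \<in> ran s \<longleftrightarrow> s x = Some y"
    proof
      assume "y \<in> ran s"
      then obtain x' where "s x' = Some y"
        by (auto simp: ran_def)
      with le Some assms(1) show "s x = Some y"
        by (metis domI inj_onD)
    qed (auto simp: ran_def)
    with le Some show ?thesis
      by (cases "s x") auto
  qed (use le in \<open>cases "s x"; auto\<close>)
  moreover have "pcomp (Some |` ran s) (Some |` ran s) = Some |` ran s"
    by (auto simp: pcomp_def restrict_map_def fun_eq_iff)
  ultimately show ?thesis
    using assms(3) by (auto simp: nat_po_def pcomp_def)
qed

lemma map_le_dom_subset_imp_eq:
  assumes "f \<subseteq>\<^sub>m g" "dom g \<subseteq> dom f"
  shows "f = g"
proof (rule map_le_antisym)
  show "g \<subseteq>\<^sub>m f"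
    unfolding map_le_def
  proof
    fix a assume "a \<in> dom g"
    then have "a \<in> dom f"
      using assms(2) by blast
    then show "g a = f a"
      using assms(1) by (simp add: map_le_def)
  qed
qed (fact assms(1))

lemma F_inverse_if_unique_total_extension:
  assumes inverse: "inverse_semigroup_on S m"
    and nat_po_iff: "\<And>s t. s \<in> S \<Longrightarrow> t \<in> S \<Longrightarrow> nat_po S m s t \<longleftrightarrow> s \<subseteq>\<^sub>m t"
    and dom_subset: "\<And>t. t \<in> S \<Longrightarrow> dom t \<subseteq> X"
    and extension: "\<And>s. s \<in> S \<Longrightarrow> \<exists>!t. t \<in> S \<and> dom t = X \<and> s \<subseteq>\<^sub>m t"
  shows "F_inverse S m"
proof -
  have maximal_iff: "maximal_in S m t \<longleftrightarrow> t \<in> S \<and> dom t = X" for t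
  proof
    assume t: "maximal_in S m t"
    then have tS: "t \<in> S"
      by (simp add: maximal_in_def)
    then obtain t' where t': "t' \<in> S" "dom t' = X" "t \<subseteq>\<^sub>m t'"
      using extension by blast
    then have "nat_po S m t t'"
      using nat_po_iff[OF tS] by simp
    with t t' have "t' = t"
      by (simp add: maximal_in_def)
    with tS t' show "t \<in> S \<and> dom t = X"
      by simp
  next
    assume t: "t \<in> S \<and> dom t = X"
    have "t' = t" if "t' \<in> S" "t \<subseteq>\<^sub>m t'" for t'
      using map_le_dom_subset_imp_eq[OF that(2)] t dom_subset[OF that(1)] by simp
    with t show "maximal_in S m t"
      using nat_po_iff by (simp add: maximal_in_def)
  qed
  show ?thesis
    unfolding F_inverse_def
  proof (intro conjI ballI inverse)
    fix s assume s: "s \<in> S"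
    obtain t where t: "t \<in> S" "dom t = X" "s \<subseteq>\<^sub>m t"
      and unique: "\<And>t'. t' \<in> S \<Longrightarrow> dom t' = X \<Longrightarrow> s \<subseteq>\<^sub>m t' \<Longrightarrow> t' = t"
      using extension[OF s] by (elim ex1E) blast
    show "\<exists>!u. maximal_in S m u \<and> nat_po S m s u"
    proof (rule ex1I[of _ t])
      show "maximal_in S m t \<and> nat_po S m s t"
        using t by (simp add: maximal_iff nat_po_iff[OF s])
    next
      fix u assume "maximal_in S m u \<and> nat_po S m s u"
      then have "u \<in> S" "dom u = X" "nat_po S m s u"
        by (simp_all add: maximal_iff)
      then show "u = t"
        using unique nat_po_iff[OF s] by simp
    qed
  qed
qed

section \<open>The inverse monoid of cofinite partial isometries\<close>

lemma finite_diff_dom_map_comp: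
  assumes "inj_on \<alpha> (dom \<alpha>)" "ran \<alpha> \<subseteq> X" "finite (X - dom \<alpha>)" "finite (X - dom \<beta>)"
  shows "finite (X - dom (\<beta> \<circ>\<^sub>m \<alpha>))"
proof -
  have "inj_on (\<lambda>x. the (\<alpha> x)) (dom \<alpha>)"
  proof (rule inj_onI)
    fix x y assume "x \<in> dom \<alpha>" "y \<in> dom \<alpha>" "the (\<alpha> x) = the (\<alpha> y)"
    then show "x = y"
      using assms(1) by (metis domD inj_onD option.sel)
  qed
  then have "finite ((\<lambda>x. the (\<alpha> x)) -` (X - dom \<beta>) \<inter> dom \<alpha>)"
    using assms(4) by (intro finite_vimage_IntI)
  moreover have "X - dom (\<beta> \<circ>\<^sub>m \<alpha>) \<subseteq> (X - dom \<alpha>) \<union> ((\<lambda>x. the (\<alpha> x)) -` (X - dom \<beta>) \<inter> dom \<alpha>)"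
    using assms(2) by (auto simp: map_comp_def ran_def split: option.splits)
  ultimately show ?thesis
    using assms(3) by (meson finite_UnI finite_subset)
qed

lemma finite_diff_ran_map_comp:
  assumes "dom \<beta> \<subseteq> X" "finite (X - ran \<alpha>)" "finite (X - ran \<beta>)"
  shows "finite (X - ran (\<beta> \<circ>\<^sub>m \<alpha>))"
proof -
  have "X - ran (\<beta> \<circ>\<^sub>m \<alpha>) \<subseteq> (X - ran \<beta>) \<union> (\<lambda>z. the (\<beta> z)) ` (X - ran \<alpha>)"
  proof
    fix y assume y: "y \<in> X - ran (\<beta> \<circ>\<^sub>m \<alpha>)"
    show "y \<in> (X - ran \<beta>) \<union> (\<lambda>z. the (\<beta> z)) ` (X - ran \<alpha>)"
    proof (cases "y \<in> ran \<beta>")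
      case True
      then obtain z where z: "\<beta> z = Some y"
        by (auto simp: ran_def)
      have "z \<notin> ran \<alpha>"
      proof
        assume "z \<in> ran \<alpha>"
        then obtain x where "\<alpha> x = Some z"
          by (auto simp: ran_def)
        with z have "(\<beta> \<circ>\<^sub>m \<alpha>) x = Some y"
          by simp
        with y show False
          by (metis DiffE ranI)
      qed
      moreover have "z \<in> X"
        using assms(1) z by blast
      ultimately show ?thesis
        using z by force
    qed (use y in auto)
  qed
  then show ?thesis
    using assms(2,3) by (meson finite_UnI finite_imageI finite_subset)
qed

lemma IN_inf_iff:
  "\<alpha> \<in> IN_inf n \<longleftrightarrow>
     dom \<alpha> \<subseteq> Npts n \<and> ran \<alpha> \<subseteq> Npts n \<and> inj_on \<alpha> (dom \<alpha>) \<and>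
     (\<forall>x y x' y'. \<alpha> x = Some x' \<longrightarrow> \<alpha> y = Some y' \<longrightarrow> eucl_dist x' y' = eucl_dist x y) \<and>
     finite (Npts n - dom \<alpha>) \<and> finite (Npts n - ran \<alpha>)"
proof -
  have "(\<forall>x\<in>dom \<alpha>. \<forall>y\<in>dom \<alpha>. eucl_dist (the (\<alpha> x)) (the (\<alpha> y)) = eucl_dist x y) \<longleftrightarrow>
        (\<forall>x y x' y'. \<alpha> x = Some x' \<longrightarrow> \<alpha> y = Some y' \<longrightarrow> eucl_dist x' y' = eucl_dist x y)"
    by force
  then show ?thesis
    by (simp add: IN_inf_def partial_isometry_def cofinite_pmap_def)
qed

lemma IN_inf_Some_Npts:
  assumes "\<alpha> \<in> IN_inf n" "\<alpha> x = Some y"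
  shows "x \<in> Npts n" "y \<in> Npts n"
proof -
  have "x \<in> dom \<alpha>" "y \<in> ran \<alpha>"
    using assms(2) by (auto intro: ranI)
  then show "x \<in> Npts n" "y \<in> Npts n"
    using assms(1) by (auto simp: IN_inf_iff)
qed

lemma IN_inf_inj: "\<alpha> \<in> IN_inf n \<Longrightarrow> inj_on \<alpha> (dom \<alpha>)"
  by (simp add: IN_inf_iff)

lemma IN_inf_eucl_dist:
  "\<alpha> \<in> IN_inf n \<Longrightarrow> \<alpha> x = Some x' \<Longrightarrow> \<alpha> y = Some y' \<Longrightarrow> eucl_dist x' y' = eucl_dist x y"
  by (simp add: IN_inf_iff)

lemma IN_inf_cofinite:
  assumes "\<alpha> \<in> IN_inf n"
  shows "finite (Npts n - dom \<alpha>)" "finite (Npts n - ran \<alpha>)"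
  using assms by (simp_all add: IN_inf_iff)

lemma IN_inf_pcomp:
  assumes \<alpha>: "\<alpha> \<in> IN_inf n" and \<beta>: "\<beta> \<in> IN_inf n"
  shows "pcomp \<alpha> \<beta> \<in> IN_inf n"
proof -
  have \<alpha>': "dom \<alpha> \<subseteq> Npts n" "ran \<alpha> \<subseteq> Npts n" "inj_on \<alpha> (dom \<alpha>)"
    and \<beta>': "dom \<beta> \<subseteq> Npts n" "ran \<beta> \<subseteq> Npts n" "inj_on \<beta> (dom \<beta>)"
    using \<alpha> \<beta> by (simp_all add: IN_inf_iff)
  have "dom (\<beta> \<circ>\<^sub>m \<alpha>) \<subseteq> Npts n" "ran (\<beta> \<circ>\<^sub>m \<alpha>) \<subseteq> Npts n"
    using \<alpha>'(1) \<beta>'(2) by (auto simp: map_comp_def ran_def split: option.splits)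
  moreover have "inj_on (\<beta> \<circ>\<^sub>m \<alpha>) (dom (\<beta> \<circ>\<^sub>m \<alpha>))"
  proof (rule inj_onI)
    fix x y assume "x \<in> dom (\<beta> \<circ>\<^sub>m \<alpha>)" "y \<in> dom (\<beta> \<circ>\<^sub>m \<alpha>)"
      and eq: "(\<beta> \<circ>\<^sub>m \<alpha>) x = (\<beta> \<circ>\<^sub>m \<alpha>) y"
    then obtain z where "(\<beta> \<circ>\<^sub>m \<alpha>) x = Some z" "(\<beta> \<circ>\<^sub>m \<alpha>) y = Some z"
      by auto
    then obtain x' y' where "\<alpha> x = Some x'" "\<alpha> y = Some y'" "\<beta> x' = Some z" "\<beta> y' = Some z"
      by (auto simp: map_comp_Some_iff)
    then show "x = y"
      using \<alpha>'(3) \<beta>'(3) by (metis domI inj_onD)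
  qed
  moreover have "eucl_dist x' y' = eucl_dist x y"
    if "(\<beta> \<circ>\<^sub>m \<alpha>) x = Some x'" "(\<beta> \<circ>\<^sub>m \<alpha>) y = Some y'" for x y x' y'
    using that IN_inf_eucl_dist[OF \<alpha>] IN_inf_eucl_dist[OF \<beta>]
    by (auto simp: map_comp_Some_iff)
  moreover have "finite (Npts n - dom (\<beta> \<circ>\<^sub>m \<alpha>))"
    using \<alpha>'(2,3) IN_inf_cofinite[OF \<alpha>] IN_inf_cofinite[OF \<beta>] by (intro finite_diff_dom_map_comp)
  moreover have "finite (Npts n - ran (\<beta> \<circ>\<^sub>m \<alpha>))"
    using \<beta>'(1) IN_inf_cofinite[OF \<alpha>] IN_inf_cofinite[OF \<beta>] by (intro finite_diff_ran_map_comp)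
  ultimately show ?thesis
    by (simp add: IN_inf_iff pcomp_def)
qed

lemma IN_inf_pinv:
  assumes \<alpha>: "\<alpha> \<in> IN_inf n"
  shows "pinv \<alpha> \<in> IN_inf n"
proof -
  have inj: "inj_on \<alpha> (dom \<alpha>)"
    using \<alpha> by (rule IN_inf_inj)
  have "eucl_dist x' y' = eucl_dist x y"
    if "pinv \<alpha> x = Some x'" "pinv \<alpha> y = Some y'" for x y x' y'
    using that IN_inf_eucl_dist[OF \<alpha>] by (simp add: pinv_eq_Some_iff[OF inj])
  then show ?thesis
    using \<alpha> inj_on_pinv[OF inj] by (simp add: IN_inf_iff dom_pinv ran_pinv[OF inj])
qed

lemma IN_inf_restrict_Some:
  assumes "A \<subseteq> Npts n" "finite (Npts n - A)"
  shows "Some |` A \<in> IN_inf n"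
proof -
  have "dom (Some |` A) = A" "ran (Some |` A) = A"
    by (auto simp: restrict_map_def ran_def split: if_splits)
  moreover have "inj_on (Some |` A) A"
    by (auto simp: inj_on_def restrict_map_def)
  ultimately show ?thesis
    using assms by (auto simp: IN_inf_iff restrict_map_def split: if_splits)
qed

lemma IN_inf_inverse_semigroup: "inverse_semigroup_on (IN_inf n) pcomp"
  using IN_inf_inj IN_inf_pcomp IN_inf_pinv by (rule inverse_semigroup_on_partial_injections)

lemma IN_inf_nat_po_iff:
  assumes "s \<in> IN_inf n" "t \<in> IN_inf n"
  shows "nat_po (IN_inf n) pcomp s t \<longleftrightarrow> s \<subseteq>\<^sub>m t"
proof
  show "nat_po (IN_inf n) pcomp s t \<Longrightarrow> s \<subseteq>\<^sub>m t"
    using IN_inf_inj by (rule nat_po_imp_map_le)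
next
  have "Some |` ran s \<in> IN_inf n"
    using assms(1) by (intro IN_inf_restrict_Some) (simp_all add: IN_inf_iff)
  then show "s \<subseteq>\<^sub>m t \<Longrightarrow> nat_po (IN_inf n) pcomp s t"
    using IN_inf_inj[OF assms(2)] by (intro map_le_imp_nat_po)
qed

section \<open>Cofinite partial isometries act by coordinate permutations\<close>

definition sq_dist :: "nat \<Rightarrow> nat list \<Rightarrow> nat list \<Rightarrow> int" where
  "sq_dist n x y = (\<Sum>k<n. (int (x ! k) - int (y ! k))\<^sup>2)"

definition inner_at :: "nat \<Rightarrow> nat list \<Rightarrow> nat list \<Rightarrow> nat list \<Rightarrow> int" where
  "inner_at n q x y = (\<Sum>k<n. (int (x ! k) - int (q ! k)) * (int (y ! k) - int (q ! k)))"

lemma eucl_dist_eq_sqrt_sq_dist: "length x = n \<Longrightarrow> eucl_dist x y = sqrt (of_int (sq_dist n x y))"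
  by (simp add: eucl_dist_def sq_dist_def of_int_sum)

lemma inner_at_polarization: "2 * inner_at n q x y = sq_dist n x q + sq_dist n y q - sq_dist n x y"
proof -
  have "sq_dist n x q + sq_dist n y q - sq_dist n x y =
     (\<Sum>k<n. (int (x ! k) - int (q ! k))\<^sup>2 + (int (y ! k) - int (q ! k))\<^sup>2 - (int (x ! k) - int (y ! k))\<^sup>2)"
    by (simp add: sq_dist_def sum.distrib sum_subtractf)
  also have "\<dots> = (\<Sum>k<n. 2 * ((int (x ! k) - int (q ! k)) * (int (y ! k) - int (q ! k))))"
    by (rule sum.cong) (simp_all add: power2_eq_square algebra_simps)
  finally show ?thesis
    by (simp add: inner_at_def sum_distrib_left)
qed

lemma IN_inf_sq_dist:
  assumes "\<alpha> \<in> IN_inf n" "\<alpha> x = Some x'" "\<alpha> y = Some y'"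
  shows "sq_dist n x' y' = sq_dist n x y"
proof -
  have "length x = n" "length x' = n"
    using IN_inf_Some_Npts[OF assms(1,2)] by (simp_all add: Npts_def)
  then show ?thesis
    using IN_inf_eucl_dist[OF assms] by (simp add: eucl_dist_eq_sqrt_sq_dist)
qed

lemma IN_inf_inner_at:
  assumes "\<alpha> \<in> IN_inf n" "\<alpha> q = Some q'" "\<alpha> x = Some x'" "\<alpha> y = Some y'"
  shows "inner_at n q' x' y' = inner_at n q x y"
  using inner_at_polarization[of n q' x' y'] inner_at_polarization[of n q x y]
    IN_inf_sq_dist[OF assms(1,3,2)] IN_inf_sq_dist[OF assms(1,4,2)] IN_inf_sq_dist[OF assms(1,3,4)]
  by simp

lemma inner_at_replicate_update:
  assumes "i < n"
  shows "inner_at n (replicate n M) x ((replicate n M)[i := Suc M]) = int (x ! i) - int M"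
proof -
  have "inner_at n (replicate n M) x ((replicate n M)[i := Suc M])
      = (\<Sum>k<n. if k = i then int (x ! i) - int M else 0)"
    unfolding inner_at_def by (rule sum.cong) (auto simp: nth_list_update)
  also have "\<dots> = int (x ! i) - int M"
    using assms by simp
  finally show ?thesis .
qed

lemma IN_inf_inner_at_frame:
  assumes "\<alpha> \<in> IN_inf n" "\<alpha> (replicate n M) = Some a" "i < n" "\<alpha> ((replicate n M)[i := Suc M]) = Some b"
    and "\<alpha> x = Some y"
  shows "inner_at n a y b = int (x ! i) - int M"
  using IN_inf_inner_at[OF assms(1,2,5,4)] inner_at_replicate_update[OF assms(3)] by simp

lemma int_sum_squares_eq_1:
  fixes z :: "nat \<Rightarrow> int"
  assumes "(\<Sum>k<n. z k * z k) = 1"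
  obtains k s where "k < n" "s = 1 \<or> s = -1" "\<And>j. j < n \<Longrightarrow> z j = (if j = k then s else 0)"
proof -
  have "\<exists>k<n. z k \<noteq> 0"
  proof (rule ccontr)
    assume "\<not> (\<exists>k<n. z k \<noteq> 0)"
    then have "(\<Sum>k<n. z k * z k) = 0"
      by simp
    with assms show False
      by simp
  qed
  then obtain k where k: "k < n" "z k \<noteq> 0"
    by blast
  have split: "(\<Sum>j<n. z j * z j) = z k * z k + (\<Sum>j\<in>{..<n} - {k}. z j * z j)"
    using k by (simp add: sum.remove)
  have "(\<Sum>j\<in>{..<n} - {k}. z j * z j) \<ge> 0"
    by (simp add: sum_nonneg)
  moreover have "z k * z k \<ge> 1"
  proof -
    have "z k * z k > 0"
      using k(2) by (auto simp: zero_less_mult_iff linorder_neq_iff)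
    then show ?thesis
      by simp
  qed
  ultimately have one: "z k * z k = 1" and rest: "(\<Sum>j\<in>{..<n} - {k}. z j * z j) = 0"
    using split assms by linarith+
  have "z j = 0" if "j < n" "j \<noteq> k" for j
    using rest that sum_nonneg_eq_0_iff[of "{..<n} - {k}" "\<lambda>j. z j * z j"] by simp
  then show thesis
    using one k(1) by (intro that[of k "z k"]) (auto simp: square_eq_1_iff)
qed

lemma orthonormal_int_vectors_signed_permutation:
  fixes v :: "nat \<Rightarrow> nat \<Rightarrow> int"
  assumes orthonormal: "\<And>i j. i < n \<Longrightarrow> j < n \<Longrightarrow> (\<Sum>k<n. v i k * v j k) = (if i = j then 1 else 0)"
  obtains \<pi> \<epsilon> where "bij_betw \<pi> {..<n} {..<n}" "\<And>i. i < n \<Longrightarrow> \<epsilon> i = 1 \<or> \<epsilon> i = -1"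
    "\<And>i k. i < n \<Longrightarrow> k < n \<Longrightarrow> v i k = (if k = \<pi> i then \<epsilon> i else 0)"
proof -
  have "\<forall>i\<in>{..<n}. \<exists>k. k < n \<and> (v i k = 1 \<or> v i k = -1) \<and>
      (\<forall>j<n. j \<noteq> k \<longrightarrow> v i j = 0)"
  proof
    fix i assume "i \<in> {..<n}"
    then have "(\<Sum>k<n. v i k * v i k) = 1"
      using orthonormal by simp
    then obtain k s where "k < n" "s = 1 \<or> s = -1"
      "\<And>j. j < n \<Longrightarrow> v i j = (if j = k then s else 0)"
      by (elim int_sum_squares_eq_1) blast
    then show "\<exists>k. k < n \<and> (v i k = 1 \<or> v i k = -1) \<and> (\<forall>j<n. j \<noteq> k \<longrightarrow> v i j = 0)"
      by (intro exI[of _ k]) auto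
  qed
  then obtain \<pi> where \<pi>: "\<forall>i\<in>{..<n}. \<pi> i < n \<and> (v i (\<pi> i) = 1 \<or> v i (\<pi> i) = -1) \<and>
      (\<forall>j<n. j \<noteq> \<pi> i \<longrightarrow> v i j = 0)"
    by (auto dest!: bchoice)
  define \<epsilon> where "\<epsilon> i = v i (\<pi> i)" for i
  have \<pi>_less: "\<pi> i < n" and \<epsilon>: "\<epsilon> i = 1 \<or> \<epsilon> i = -1" if "i < n" for i
    using \<pi> that by (auto simp: \<epsilon>_def)
  have v: "v i k = (if k = \<pi> i then \<epsilon> i else 0)" if "i < n" "k < n" for i k
    using \<pi> that by (auto simp: \<epsilon>_def)
  have "inj_on \<pi> {..<n}"
  proof (rule inj_onI)
    fix i j assume i: "i \<in> {..<n}" and j: "j \<in> {..<n}" and eq: "\<pi> i = \<pi> j"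
    have "(\<Sum>k<n. v i k * v j k) = (\<Sum>k<n. if k = \<pi> i then \<epsilon> i * \<epsilon> j else 0)"
      using i j eq by (intro sum.cong) (simp_all add: v)
    also have "\<dots> = \<epsilon> i * \<epsilon> j"
      using \<pi>_less i by simp
    finally show "i = j"
      using orthonormal[of i j] \<epsilon>[of i] \<epsilon>[of j] i j by (auto split: if_splits)
  qed
  moreover have "\<pi> ` {..<n} \<subseteq> {..<n}"
    using \<pi>_less by auto
  ultimately have "bij_betw \<pi> {..<n} {..<n}"
    by (simp add: bij_betw_def endo_inj_surj)
  then show thesis
    using \<epsilon> v by (rule that)
qed

lemma Npts_replicate: "c \<ge> 1 \<Longrightarrow> replicate n c \<in> Npts n"
  by (simp add: Npts_def)

lemma Npts_list_update: "x \<in> Npts n \<Longrightarrow> v \<ge> 1 \<Longrightarrow> x[i := v] \<in> Npts n"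
  by (cases "i < length x") (auto simp: Npts_def nth_list_update)

lemma Npts_nth_ge_1: "x \<in> Npts n \<Longrightarrow> k < n \<Longrightarrow> x ! k \<ge> 1"
  by (simp add: Npts_def)

lemma IN_inf_large_points:
  assumes "\<alpha> \<in> IN_inf n"
  obtains M where "M \<ge> 1"
    "\<And>x k. x \<in> Npts n \<Longrightarrow> k < n \<Longrightarrow> x ! k \<ge> M \<Longrightarrow> x \<in> dom \<alpha> \<and> x \<in> ran \<alpha>"
proof -
  let ?F = "(Npts n - dom \<alpha>) \<union> (Npts n - ran \<alpha>)"
  have "finite (\<Union>x\<in>?F. set x)"
    using IN_inf_cofinite[OF assms] by simp
  then obtain M0 where M0: "\<forall>v\<in>(\<Union>x\<in>?F. set x). v < M0"
    by (auto simp: finite_nat_set_iff_bounded)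
  show thesis
  proof (rule that[of "Suc M0"])
    fix x k assume x: "x \<in> Npts n" "k < n" "x ! k \<ge> Suc M0"
    then have "x ! k \<in> set x"
      by (simp add: Npts_def)
    moreover have "\<not> x ! k < M0"
      using x(3) by simp
    ultimately have "x \<notin> ?F"
      using M0 by blast
    with x(1) show "x \<in> dom \<alpha> \<and> x \<in> ran \<alpha>"
      by blast
  qed simp
qed

text \<open>With \<open>A = (M, \<dots>, M)\<close> for \<open>M\<close> large, the vectors \<open>\<alpha>(A + e\<^sub>i) - \<alpha> A\<close> are orthonormal;
  pairing \<open>\<alpha> x - \<alpha> A\<close> with them recovers \<open>x\<^sub>i - M\<close>.\<close>

lemma IN_inf_coordinate_form:
  assumes "n \<ge> 1" and \<alpha>: "\<alpha> \<in> IN_inf n"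
  obtains \<pi> :: "nat \<Rightarrow> nat" and \<epsilon> c :: "nat \<Rightarrow> int"
  where "bij_betw \<pi> {..<n} {..<n}" "\<And>i. i < n \<Longrightarrow> \<epsilon> i = 1 \<or> \<epsilon> i = -1"
    "\<And>x y i. \<alpha> x = Some y \<Longrightarrow> i < n \<Longrightarrow> int (y ! \<pi> i) = c i + \<epsilon> i * int (x ! i)"
proof -
  obtain M where M: "M \<ge> 1"
    and large: "\<And>x k. x \<in> Npts n \<Longrightarrow> k < n \<Longrightarrow> x ! k \<ge> M \<Longrightarrow> x \<in> dom \<alpha> \<and> x \<in> ran \<alpha>"
    using IN_inf_large_points[OF \<alpha>] by blast
  define B where "B i = (replicate n M)[i := Suc M]" for i
  define a where "a = the (\<alpha> (replicate n M))"
  define b where "b i = the (\<alpha> (B i))" for i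
  have a: "\<alpha> (replicate n M) = Some a"
    using large[of "replicate n M" 0] assms(1) M by (auto simp: a_def Npts_replicate)
  have b: "\<alpha> (B i) = Some (b i)" if "i < n" for i
    using large[of "B i" i] that M by (auto simp: b_def B_def Npts_replicate Npts_list_update)
  have frame: "inner_at n a y (b i) = int (x ! i) - int M" if "\<alpha> x = Some y" "i < n" for x y i
    using IN_inf_inner_at_frame[OF \<alpha> a that(2) b[OF that(2), unfolded B_def] that(1)] .
  define v where "v i k = int (b i ! k) - int (a ! k)" for i k
  have "(\<Sum>k<n. v i k * v j k) = (if i = j then 1 else 0)" if "i < n" "j < n" for i j
    using frame[OF b[OF that(1)] that(2)] that by (simp add: inner_at_def v_def B_def)
  then obtain \<pi> \<epsilon> where \<pi>: "bij_betw \<pi> {..<n} {..<n}" and \<epsilon>: "\<And>i. i < n \<Longrightarrow> \<epsilon> i = 1 \<or> \<epsilon> i = -1"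
    and v: "\<And>i k. i < n \<Longrightarrow> k < n \<Longrightarrow> v i k = (if k = \<pi> i then \<epsilon> i else 0)"
    by (elim orthonormal_int_vectors_signed_permutation) blast
  have "int (y ! \<pi> i) = (int (a ! \<pi> i) - \<epsilon> i * int M) + \<epsilon> i * int (x ! i)"
    if "\<alpha> x = Some y" "i < n" for x y i
  proof -
    have "\<pi> i < n"
      using \<pi> that(2) by (meson bij_betwE lessThan_iff)
    have "inner_at n a y (b i) = (\<Sum>k<n. if k = \<pi> i then (int (y ! k) - int (a ! k)) * \<epsilon> i else 0)"
      unfolding inner_at_def using that(2) by (intro sum.cong) (simp_all flip: v_def add: v)
    also have "\<dots> = (int (y ! \<pi> i) - int (a ! \<pi> i)) * \<epsilon> i"
      using \<open>\<pi> i < n\<close> by simp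
    finally have "(int (y ! \<pi> i) - int (a ! \<pi> i)) * \<epsilon> i = int (x ! i) - int M"
      using frame[OF that] by simp
    then show ?thesis
      using \<epsilon>[OF that(2)] by (auto simp: algebra_simps)
  qed
  with \<pi> \<epsilon> show thesis
    by (rule that)
qed

lemma IN_inf_affine_coordinate_sign:
  fixes e c :: int
  assumes \<alpha>: "\<alpha> \<in> IN_inf n" and i: "i < n" and j: "j < n" and e: "e = 1 \<or> e = -1"
    and coord: "\<And>x y. \<alpha> x = Some y \<Longrightarrow> int (y ! j) = c + e * int (x ! i)"
  shows "e = 1"
proof (rule ccontr)
  assume "e \<noteq> 1"
  obtain M where M: "M \<ge> 1"
    and large: "\<And>x k. x \<in> Npts n \<Longrightarrow> k < n \<Longrightarrow> x ! k \<ge> M \<Longrightarrow> x \<in> dom \<alpha> \<and> x \<in> ran \<alpha>"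
    using IN_inf_large_points[OF \<alpha>] by blast
  define x where "x = (replicate n M)[i := M + nat c]"
  have "x \<in> Npts n" "x ! i = M + nat c"
    using M i by (simp_all add: x_def Npts_replicate Npts_list_update)
  then obtain y where y: "\<alpha> x = Some y"
    using large[of x i] i by auto
  then have "int (y ! j) = c - int (M + nat c)"
    using coord \<open>e \<noteq> 1\<close> e \<open>x ! i = M + nat c\<close> by auto
  moreover have "y ! j \<ge> 1"
    using Npts_nth_ge_1[OF IN_inf_Some_Npts(2)[OF \<alpha> y] j] .
  ultimately show False
    using M by linarith
qed

text \<open>The hypothesis \<open>n \<ge> 2\<close> is needed: on \<open>\<nat>\<close> the shift \<open>x \<mapsto> x + 1\<close> is a cofinite
  partial isometry. A second coordinate, held large, keeps the test points below inside the
  cofinite domain and range while coordinate \<open>i\<close> resp. \<open>j\<close> takes the value \<open>1\<close>.\<close>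

lemma IN_inf_coordinate_shift_eq_0:
  fixes c :: int
  assumes "n \<ge> 2" and \<alpha>: "\<alpha> \<in> IN_inf n" and i: "i < n" and j: "j < n"
    and coord: "\<And>x y. \<alpha> x = Some y \<Longrightarrow> int (y ! j) = c + int (x ! i)"
  shows "c = 0"
proof -
  obtain M where M: "M \<ge> 1"
    and large: "\<And>x k. x \<in> Npts n \<Longrightarrow> k < n \<Longrightarrow> x ! k \<ge> M \<Longrightarrow> x \<in> dom \<alpha> \<and> x \<in> ran \<alpha>"
    using IN_inf_large_points[OF \<alpha>] by blast
  have other: "\<exists>k'<n. k' \<noteq> k" for k
    using assms(1) by (intro exI[of _ "if k = 0 then 1 else 0"]) auto
  have "c \<ge> 0"
  proof -
    obtain i' where i': "i' < n" "i' \<noteq> i"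
      using other by blast
    define x where "x = (replicate n 1)[i' := M]"
    have "x \<in> Npts n" "x ! i' = M" "x ! i = 1"
      using M i i' by (simp_all add: x_def Npts_replicate Npts_list_update)
    then obtain y where y: "\<alpha> x = Some y"
      using large[of x i'] i' by auto
    have "y ! j \<ge> 1"
      using Npts_nth_ge_1[OF IN_inf_Some_Npts(2)[OF \<alpha> y] j] .
    then show ?thesis
      using coord[OF y] \<open>x ! i = 1\<close> by simp
  qed
  moreover have "c \<le> 0"
  proof -
    obtain j' where j': "j' < n" "j' \<noteq> j"
      using other by blast
    define y where "y = (replicate n 1)[j' := M]"
    have "y \<in> Npts n" "y ! j' = M" "y ! j = 1"
      using M j j' by (simp_all add: y_def Npts_replicate Npts_list_update)
    then obtain x where x: "\<alpha> x = Some y"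
      using large[of y j'] j' by (auto simp: ran_def)
    have "x ! i \<ge> 1"
      using Npts_nth_ge_1[OF IN_inf_Some_Npts(1)[OF \<alpha> x] i] .
    then show ?thesis
      using coord[OF x] \<open>y ! j = 1\<close> by simp
  qed
  ultimately show ?thesis
    by simp
qed

definition permute_coords :: "(nat \<Rightarrow> nat) \<Rightarrow> nat \<Rightarrow> nat list \<Rightarrow> nat list" where
  "permute_coords \<rho> n x = map (\<lambda>k. x ! \<rho> k) [0..<n]"

definition coord_perm :: "(nat \<Rightarrow> nat) \<Rightarrow> nat \<Rightarrow> (nat list \<rightharpoonup> nat list)" where
  "coord_perm \<rho> n = (\<lambda>x. Some (permute_coords \<rho> n x)) |` Npts n"

lemma length_permute_coords [simp]: "length (permute_coords \<rho> n x) = n"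
  by (simp add: permute_coords_def)

lemma nth_permute_coords [simp]: "k < n \<Longrightarrow> permute_coords \<rho> n x ! k = x ! \<rho> k"
  by (simp add: permute_coords_def)

lemma permute_coords_inverse:
  assumes "\<And>k. k < n \<Longrightarrow> \<rho> k < n \<and> \<sigma> (\<rho> k) = k" "length x = n"
  shows "permute_coords \<rho> n (permute_coords \<sigma> n x) = x"
  by (rule nth_equalityI) (simp_all add: assms)

lemma permute_coords_Npts:
  assumes "bij_betw \<rho> {..<n} {..<n}" "x \<in> Npts n"
  shows "permute_coords \<rho> n x \<in> Npts n"
  using assms by (auto simp: Npts_def dest: bij_betwE)

lemma eucl_dist_permute_coords:
  assumes "bij_betw \<rho> {..<n} {..<n}" "length x = n"
  shows "eucl_dist (permute_coords \<rho> n x) (permute_coords \<rho> n y) = eucl_dist x y"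
proof -
  have "(\<Sum>k<n. (real (x ! \<rho> k) - real (y ! \<rho> k))\<^sup>2) = (\<Sum>k<n. (real (x ! k) - real (y ! k))\<^sup>2)"
    using sum.reindex_bij_betw[OF assms(1), of "\<lambda>k. (real (x ! k) - real (y ! k))\<^sup>2"] .
  then show ?thesis
    using assms(2) by (simp add: eucl_dist_def)
qed

lemma dom_coord_perm [simp]: "dom (coord_perm \<rho> n) = Npts n"
  by (simp add: coord_perm_def)

lemma permute_coords_inv_into:
  assumes \<rho>: "bij_betw \<rho> {..<n} {..<n}" and "length x = n"
  shows "permute_coords \<rho> n (permute_coords (inv_into {..<n} \<rho>) n x) = x"
    and "permute_coords (inv_into {..<n} \<rho>) n (permute_coords \<rho> n x) = x"
proof -
  have \<sigma>: "bij_betw (inv_into {..<n} \<rho>) {..<n} {..<n}"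
    using \<rho> by (rule bij_betw_inv_into)
  show "permute_coords \<rho> n (permute_coords (inv_into {..<n} \<rho>) n x) = x"
    using \<rho> assms(2) by (intro permute_coords_inverse) (auto simp: bij_betw_inv_into_left dest: bij_betwE)
  show "permute_coords (inv_into {..<n} \<rho>) n (permute_coords \<rho> n x) = x"
    using \<rho> \<sigma> assms(2) by (intro permute_coords_inverse) (auto simp: bij_betw_inv_into_right dest: bij_betwE)
qed

lemma ran_coord_perm:
  assumes \<rho>: "bij_betw \<rho> {..<n} {..<n}"
  shows "ran (coord_perm \<rho> n) = Npts n"
proof
  show "ran (coord_perm \<rho> n) \<subseteq> Npts n"
    using permute_coords_Npts[OF \<rho>] by (auto simp: coord_perm_def dest: ran_restrictD)
next
  show "Npts n \<subseteq> ran (coord_perm \<rho> n)"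
  proof
    fix y assume y: "y \<in> Npts n"
    then have "coord_perm \<rho> n (permute_coords (inv_into {..<n} \<rho>) n y) = Some y"
      using permute_coords_Npts[OF bij_betw_inv_into[OF \<rho>] y] permute_coords_inv_into(1)[OF \<rho>]
      by (simp add: coord_perm_def Npts_def)
    then show "y \<in> ran (coord_perm \<rho> n)"
      by (rule ranI)
  qed
qed

lemma inj_on_coord_perm:
  assumes \<rho>: "bij_betw \<rho> {..<n} {..<n}"
  shows "inj_on (coord_perm \<rho> n) (Npts n)"
proof (rule inj_onI)
  fix x y assume x: "x \<in> Npts n" and y: "y \<in> Npts n"
    and "coord_perm \<rho> n x = coord_perm \<rho> n y"
  then have "permute_coords \<rho> n x = permute_coords \<rho> n y"
    by (simp add: coord_perm_def)
  moreover have "length x = n" "length y = n"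
    using x y by (simp_all add: Npts_def)
  ultimately show "x = y"
    using permute_coords_inv_into(2)[OF \<rho>] by metis
qed

lemma coord_perm_in_IN_inf:
  assumes \<rho>: "bij_betw \<rho> {..<n} {..<n}"
  shows "coord_perm \<rho> n \<in> IN_inf n"
proof -
  have "eucl_dist x' y' = eucl_dist x y"
    if "coord_perm \<rho> n x = Some x'" "coord_perm \<rho> n y = Some y'" for x y x' y'
  proof -
    have "x \<in> Npts n" "x' = permute_coords \<rho> n x" "y' = permute_coords \<rho> n y"
      using that by (auto simp: coord_perm_def restrict_map_def split: if_splits)
    then show ?thesis
      using eucl_dist_permute_coords[OF \<rho>] by (simp add: Npts_def)
  qed
  then show ?thesis
    using ran_coord_perm[OF \<rho>] inj_on_coord_perm[OF \<rho>] by (simp add: IN_inf_iff)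
qed

lemma IN_inf_map_le_coord_perm:
  assumes "n \<ge> 2" and \<alpha>: "\<alpha> \<in> IN_inf n"
  obtains \<rho> where "bij_betw \<rho> {..<n} {..<n}" "\<alpha> \<subseteq>\<^sub>m coord_perm \<rho> n"
proof -
  obtain \<pi> \<epsilon> c where \<pi>: "bij_betw \<pi> {..<n} {..<n}" and \<epsilon>: "\<And>i. i < n \<Longrightarrow> \<epsilon> i = 1 \<or> \<epsilon> i = -1"
    and form: "\<And>x y i. \<alpha> x = Some y \<Longrightarrow> i < n \<Longrightarrow> int (y ! \<pi> i) = c i + \<epsilon> i * int (x ! i)"
    by (rule IN_inf_coordinate_form[OF _ \<alpha>]) (use assms(1) in auto)
  have coord: "y ! \<pi> i = x ! i" if xy: "\<alpha> x = Some y" and i: "i < n" for x y i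
  proof -
    have "\<pi> i < n"
      using \<pi> i by (meson bij_betwE lessThan_iff)
    have "\<epsilon> i = 1"
      using \<alpha> i \<open>\<pi> i < n\<close> \<epsilon>[OF i] form[OF _ i] by (rule IN_inf_affine_coordinate_sign)
    then have "int (y' ! \<pi> i) = c i + int (x' ! i)" if "\<alpha> x' = Some y'" for x' y'
      using form[OF that i] by simp
    then have "c i = 0"
      using assms(1) \<alpha> i \<open>\<pi> i < n\<close> by (intro IN_inf_coordinate_shift_eq_0)
    then show ?thesis
      using form[OF xy i] \<open>\<epsilon> i = 1\<close> by simp
  qed
  define \<rho> where "\<rho> = inv_into {..<n} \<pi>"
  have \<rho>: "bij_betw \<rho> {..<n} {..<n}"
    using \<pi> by (simp add: \<rho>_def bij_betw_inv_into)
  have \<pi>\<rho>: "\<rho> k < n" "\<pi> (\<rho> k) = k" if "k < n" for k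
    using that \<pi> \<rho> by (auto simp: \<rho>_def bij_betw_inv_into_right dest: bij_betwE)
  have "\<alpha> \<subseteq>\<^sub>m coord_perm \<rho> n"
    unfolding map_le_def
  proof
    fix x assume "x \<in> dom \<alpha>"
    then obtain y where y: "\<alpha> x = Some y"
      by auto
    have "y = permute_coords \<rho> n x"
    proof (rule nth_equalityI)
      show "length y = length (permute_coords \<rho> n x)"
        using IN_inf_Some_Npts(2)[OF \<alpha> y] by (simp add: Npts_def)
      fix k assume "k < length y"
      then have "k < n"
        using IN_inf_Some_Npts(2)[OF \<alpha> y] by (simp add: Npts_def)
      then show "y ! k = permute_coords \<rho> n x ! k"
        using coord[OF y \<pi>\<rho>(1)] \<pi>\<rho>(2) by simp
    qed
    with y IN_inf_Some_Npts(1)[OF \<alpha> y] show "\<alpha> x = coord_perm \<rho> n x"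
      by (simp add: coord_perm_def)
  qed
  with \<rho> show thesis
    by (rule that)
qed

lemma coord_perm_eq_if_map_le:
  assumes s: "s \<in> IN_inf n" and \<rho>: "bij_betw \<rho> {..<n} {..<n}" and \<rho>': "bij_betw \<rho>' {..<n} {..<n}"
    and "s \<subseteq>\<^sub>m coord_perm \<rho> n" "s \<subseteq>\<^sub>m coord_perm \<rho>' n"
  shows "coord_perm \<rho> n = coord_perm \<rho>' n"
proof -
  have "\<rho> k = \<rho>' k" if k: "k < n" for k
  proof -
    obtain M where M: "M \<ge> 1"
      and large: "\<And>x k. x \<in> Npts n \<Longrightarrow> k < n \<Longrightarrow> x ! k \<ge> M \<Longrightarrow> x \<in> dom s \<and> x \<in> ran s"
      using IN_inf_large_points[OF s] by blast
    define x where "x = map (\<lambda>j. M + j) [0..<n]"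
    have x: "x \<in> Npts n"
      using M by (simp add: x_def Npts_def)
    then have "x \<in> dom s"
      using large[of x 0] k by (simp add: x_def)
    then have "coord_perm \<rho> n x = coord_perm \<rho>' n x"
      using assms(4,5) by (simp add: map_le_def)
    then have "x ! \<rho> k = x ! \<rho>' k"
      using x k by (metis coord_perm_def nth_permute_coords option.inject restrict_in)
    moreover have "\<rho> k < n" "\<rho>' k < n"
      using \<rho> \<rho>' k by (auto dest: bij_betwE)
    ultimately show ?thesis
      by (simp add: x_def)
  qed
  then show ?thesis
    by (auto simp: coord_perm_def permute_coords_def restrict_map_def fun_eq_iff)
qed

lemma IN_inf_total_eq_coord_perm:
  assumes "n \<ge> 2" "t \<in> IN_inf n" "dom t = Npts n"
  obtains \<rho> where "bij_betw \<rho> {..<n} {..<n}" "t = coord_perm \<rho> n"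
proof -
  obtain \<rho> where \<rho>: "bij_betw \<rho> {..<n} {..<n}" and "t \<subseteq>\<^sub>m coord_perm \<rho> n"
    using IN_inf_map_le_coord_perm[OF assms(1,2)] .
  then have "t = coord_perm \<rho> n"
    using assms(3) by (simp add: map_le_dom_subset_imp_eq)
  with \<rho> show thesis
    by (rule that)
qed

lemma IN_inf_unique_total_extension:
  assumes "n \<ge> 2" and s: "s \<in> IN_inf n"
  shows "\<exists>!t. t \<in> IN_inf n \<and> dom t = Npts n \<and> s \<subseteq>\<^sub>m t"
proof -
  obtain \<rho> where \<rho>: "bij_betw \<rho> {..<n} {..<n}" and le: "s \<subseteq>\<^sub>m coord_perm \<rho> n"
    using IN_inf_map_le_coord_perm[OF assms] .
  show ?thesis
  proof (rule ex1I[of _ "coord_perm \<rho> n"])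
    show "coord_perm \<rho> n \<in> IN_inf n \<and> dom (coord_perm \<rho> n) = Npts n \<and> s \<subseteq>\<^sub>m coord_perm \<rho> n"
      using coord_perm_in_IN_inf[OF \<rho>] le by simp
  next
    fix t assume t: "t \<in> IN_inf n \<and> dom t = Npts n \<and> s \<subseteq>\<^sub>m t"
    then obtain \<rho>' where \<rho>': "bij_betw \<rho>' {..<n} {..<n}" and "t = coord_perm \<rho>' n"
      using IN_inf_total_eq_coord_perm[OF assms(1)] by blast
    with t show "t = coord_perm \<rho> n"
      using coord_perm_eq_if_map_le[OF s \<rho>' \<rho>] le by simp
  qed
qed

theorem corollary4p1:
  fixes n :: nat
  assumes "n \<ge> 2"
  shows "F_inverse (IN_inf n) pcomp"
proof (rule F_inverse_if_unique_total_extension)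
  show "inverse_semigroup_on (IN_inf n) pcomp"
    by (rule IN_inf_inverse_semigroup)
  show "nat_po (IN_inf n) pcomp s t \<longleftrightarrow> s \<subseteq>\<^sub>m t" if "s \<in> IN_inf n" "t \<in> IN_inf n" for s t
    using that by (rule IN_inf_nat_po_iff)
  show "dom t \<subseteq> Npts n" if "t \<in> IN_inf n" for t
    using that by (simp add: IN_inf_iff)
  show "\<exists>!t. t \<in> IN_inf n \<and> dom t = Npts n \<and> s \<subseteq>\<^sub>m t" if "s \<in> IN_inf n" for s
    using assms that by (rule IN_inf_unique_total_extension)
qed

end
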